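(* Let $N_R, L$ be positive integers and $N_s\ge 2$ an integer, let $\mathbf{s}\in\mathbb{C}^{N_s}$ be nonzero with $P_T=\|\mathbf{s}\|_2^2/N_s$, and let $\mathbf{Y}=[\mathbf{Y}_1^T,\ldots,\mathbf{Y}_L^T]^T$ with $\mathbf{Y}_l\in\mathbb{C}^{N_R\times N_s}$ satisfy either $$\mathcal{H}_1:\ \mathbf{Y}_l=\mathbf{h}_l\mathbf{s}^T+\mathbf{Z}_l\ (l=1,\ldots,L)\qquad\text{or}\qquad \mathcal{H}_0:\ \mathbf{Y}_l=\mathbf{Z}_l\ (l=1,\ldots,L),$$ where $\mathbf{h}_l\in\mathbb{C}^{N_R}$ are deterministic and all entries of $\mathbf{Z}_1,\ldots,\mathbf{Z}_L$ are i.i.d. circularly symmetric complex Gaussian with zero mean and variance $\sigma^2>0$. Define $$L_G=\frac{\sum_{l=1}^L\frac{1}{\|\mathbf{s}\|_2^2}\|\mathbf{Y}_l\mathbf{s}^*\|_2^2}{\sum_{l=1}^L\left(\|\mathbf{Y}_l\|_F^2-\frac{1}{\|\mathbf{s}\|_2^2}\|\mathbf{Y}_l\mathbf{s}^*\|_2^2\right)}.$$ Then $$(N_s-1)L_G\sim\begin{cases}\mathcal{F}(2N_RL,\,2N_RL(N_s-1),\,0)&\text{under }\mathcal{H}_0,\\ \mathcal{F}(2N_RL,\,2N_RL(N_s-1),\,\lambda)&\text{under }\mathcal{H}_1,\end{cases}$$ where $$\lambda=\frac{2\|\mathbf{s}\|_2^2\sum_{l=1}^L\|\mathbf{h}_l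\|_2^2}{\sigma^2}=\frac{2P_TN_s\sum_{l=1}^L\|\mathbf{h}_l\|_2^2}{\sigma^2}.$$
   Context: $\mathcal{F}(n_1,n_2,\lambda)$ denotes the noncentral F-distribution with degrees of freedom $n_1,n_2$ and noncentrality parameter $\lambda$, i.e. the law of $(X_1/n_1)/(X_2/n_2)$ where $X_1$ is noncentral chi-square with $n_1$ degrees of freedom and noncentrality $\lambda$, and $X_2$ is an independent central chi-square with $n_2$ degrees of freedom. $\mathbf{s}^*$ is the entrywise complex conjugate of $\mathbf{s}$; $\|\cdot\|_F$ is the Frobenius norm. *)

theory Defs
  imports "HOL-Probability.Probability"
begin

text \<open>Law of a noncentral chi-square variable with k degrees of freedom and
noncentrality lam: the law of the sum of squares of k independent real
Gaussians with unit variance and means (sqrt lam, 0, ..., 0), whose squared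
means sum to lam.\<close>
definition nc_chi2 :: "nat \<Rightarrow> real \<Rightarrow> real measure" where
  "nc_chi2 k lam =
     distr (PiM {..<k} (\<lambda>_. density lborel std_normal_density)) borel
       (\<lambda>x. (\<Sum>i<k. (x i + (if i = 0 then sqrt lam else 0))\<^sup>2))"

definition nc_F :: "nat \<Rightarrow> nat \<Rightarrow> real \<Rightarrow> real measure" where
  "nc_F n1 n2 lam =
     distr (nc_chi2 n1 lam \<Otimes>\<^sub>M nc_chi2 n2 0) borel
       (\<lambda>(a, b). (a / real n1) / (b / real n2))"

text \<open>Statistic L_G. Y l r t is the (r,t) entry of Y_l (r < NR, t < Ns),
s t the t-th entry of s.\<close>
definition LG_stat :: "nat \<Rightarrow> nat \<Rightarrow> nat \<Rightarrow> (nat \<Rightarrow> complex) \<Rightarrow>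
    (nat \<Rightarrow> nat \<Rightarrow> nat \<Rightarrow> complex) \<Rightarrow> real" where
  "LG_stat NR L Ns s Y =
    (let ns2 = (\<Sum>t<Ns. (cmod (s t))\<^sup>2);
         proj = (\<lambda>l. (\<Sum>r<NR. (cmod (\<Sum>t<Ns. Y l r t * cnj (s t)))\<^sup>2) / ns2);
         frob = (\<lambda>l. \<Sum>r<NR. \<Sum>t<Ns. (cmod (Y l r t))\<^sup>2)
     in (\<Sum>l<L. proj l) / (\<Sum>l<L. frob l - proj l))"

end

theory Submission
  imports Defs
begin

text \<open>Realified and scaled by the noise level, the data become \<open>g + m\<close> with \<open>g\<close> a standard
  Gaussian vector in \<open>\<real>\<^sup>n\<close>, \<open>n = 2 N\<^sub>R L N\<^sub>s\<close>. The numerator of \<open>L\<^sub>G\<close> is the squared norm of the orthogonal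
  projection onto the \<open>2 N\<^sub>R L\<close>-dimensional subspace spanned by the real coordinates of \<open>s\<close> and
  \<open>\<i> s\<close> in each row, the denominator that of the residual, and the mean \<open>m\<close> lies in the subspace.
  The standard Gaussian law is invariant under rotations; a product of Givens rotations carries
  the subspace onto a set of coordinate axes and \<open>m\<close> onto a single axis, so the two squared norms
  become independent noncentral and central chi-square variables with \<open>2 N\<^sub>R L\<close> and
  \<open>2 N\<^sub>R L (N\<^sub>s - 1)\<close> degrees of freedom, and noncentrality \<open>\<parallel>m\<parallel>\<^sup>2\<close>.\<close>

section \<open>Measure-preserving maps\<close>

definition measure_preserving :: "'a measure \<Rightarrow> ('a \<Rightarrow> 'a) \<Rightarrow> bool" where
  "measure_preserving M f \<longleftrightarrow> f \<in> measurable M M \<and> distr M M f = M"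

lemma measure_preservingI:
  "f \<in> measurable M M \<Longrightarrow> distr M M f = M \<Longrightarrow> measure_preserving M f"
  by (simp add: measure_preserving_def)

lemma measure_preserving_id: "measure_preserving M (\<lambda>x. x)"
  by (simp add: measure_preserving_def)

lemma measure_preserving_comp:
  assumes f: "measure_preserving M f" and g: "measure_preserving M g"
  shows "measure_preserving M (\<lambda>x. g (f x))"
proof (rule measure_preservingI)
  show "(\<lambda>x. g (f x)) \<in> measurable M M"
    using f g by (auto simp: measure_preserving_def)
  have "distr M M (\<lambda>x. g (f x)) = distr (distr M M f) M g"
    using f g distr_distr[of g M M f M] by (simp add: measure_preserving_def comp_def)
  also have "\<dots> = M"
    using f g by (simp add: measure_preserving_def)
  finally show "distr M M (\<lambda>x. g (f x)) = M" .
qed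

lemma distr_measure_preserving:
  assumes f: "measure_preserving M f" and g: "g \<in> measurable M N"
  shows "distr M N (\<lambda>x. g (f x)) = distr M N g"
proof -
  have fm: "f \<in> measurable M M" and fd: "distr M M f = M"
    using f by (auto simp: measure_preserving_def)
  have "distr M N (\<lambda>x. g (f x)) = distr (distr M M f) N g"
    using distr_distr[OF g fm] by (simp add: comp_def)
  then show ?thesis by (simp add: fd)
qed

lemma measure_preserving_density:
  assumes f: "measure_preserving M f" and [measurable]: "g \<in> borel_measurable M"
    and inv: "\<And>x. x \<in> space M \<Longrightarrow> g (f x) = g x"
  shows "measure_preserving (density M g) f"
proof (rule measure_preservingI)
  have fm [measurable]: "f \<in> measurable M M" and fd: "distr M M f = M"
    using f by (auto simp: measure_preserving_def)
  show "f \<in> measurable (density M g) (density M g)" by simp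
  have "density M g = density (distr M M f) g" by (simp add: fd)
  also have "\<dots> = distr (density M (\<lambda>x. g (f x))) M f"
    by (rule density_distr) measurable
  also have "density M (\<lambda>x. g (f x)) = density M g"
    by (rule density_cong) (auto simp: inv)
  finally have "density M g = distr (density M g) M f" .
  moreover have "distr (density M g) (density M g) f = distr (density M g) M f"
    by (rule distr_cong) auto
  ultimately show "distr (density M g) (density M g) f = density M g"
    by simp
qed

lemma measure_preserving_pair_fst:
  assumes f: "measure_preserving M f" and N: "sigma_finite_measure N"
  shows "measure_preserving (M \<Otimes>\<^sub>M N) (\<lambda>(u, v). (f u, v))"
proof (rule measure_preservingI)
  have fm: "f \<in> measurable M M" and fd: "distr M M f = M"
    using f by (auto simp: measure_preserving_def)
  show "(\<lambda>(u, v). (f u, v)) \<in> measurable (M \<Otimes>\<^sub>M N) (M \<Otimes>\<^sub>M N)"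
    using fm by measurable
  have "distr M M f \<Otimes>\<^sub>M distr N N (\<lambda>v. v) = distr (M \<Otimes>\<^sub>M N) (M \<Otimes>\<^sub>M N) (\<lambda>(u, v). (f u, v))"
    by (rule pair_measure_distr[OF fm]) (simp_all add: N)
  then show "distr (M \<Otimes>\<^sub>M N) (M \<Otimes>\<^sub>M N) (\<lambda>(u, v). (f u, v)) = M \<Otimes>\<^sub>M N"
    by (simp add: fd)
qed

section \<open>Rotation invariance of the planar standard Gaussian\<close>

lemma lborel_pair_shear:
  fixes f :: "real \<Rightarrow> real"
  assumes [measurable]: "f \<in> borel_measurable borel"
  shows "measure_preserving (lborel \<Otimes>\<^sub>M lborel) (\<lambda>(x, y). (x, y + f x))"
proof (rule measure_preservingI)
  let ?M = "lborel \<Otimes>\<^sub>M lborel :: (real \<times> real) measure"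
  let ?s = "\<lambda>(x, y). (x, y + f x)"
  show s: "?s \<in> measurable ?M ?M" by measurable
  show "distr ?M ?M ?s = ?M"
  proof (rule measure_eqI)
    fix A assume "A \<in> sets (distr ?M ?M ?s)"
    then have A: "A \<in> sets ?M" by simp
    have "emeasure (distr ?M ?M ?s) A = emeasure ?M (?s -` A \<inter> space ?M)"
      using A s by (simp add: emeasure_distr)
    also have "\<dots> = (\<integral>\<^sup>+x. emeasure lborel (Pair x -` (?s -` A \<inter> space ?M)) \<partial>lborel)"
      using A s by (intro lborel.emeasure_pair_measure_alt measurable_sets) auto
    also have "\<dots> = (\<integral>\<^sup>+x. emeasure lborel (Pair x -` A) \<partial>lborel)"
    proof (rule nn_integral_cong)
      fix x :: real
      have "Pair x -` (?s -` A \<inter> space ?M) = (\<lambda>y. f x + y) -` (Pair x -` A) \<inter> space lborel"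
        by (auto simp: space_pair_measure add.commute)
      also have "emeasure lborel \<dots> = emeasure (distr lborel borel (\<lambda>y. f x + y)) (Pair x -` A)"
        using A by (subst emeasure_distr) (auto simp: sets_Pair1)
      finally show "emeasure lborel (Pair x -` (?s -` A \<inter> space ?M)) = emeasure lborel (Pair x -` A)"
        by (simp add: lborel_distr_plus)
    qed
    also have "\<dots> = emeasure ?M A"
      using A by (rule lborel.emeasure_pair_measure_alt[symmetric])
    finally show "emeasure (distr ?M ?M ?s) A = emeasure ?M A" .
  qed simp
qed

lemma lborel_pair_swap:
  "measure_preserving (lborel \<Otimes>\<^sub>M lborel :: (real \<times> real) measure) (\<lambda>(x, y). (y, x))"
  by (intro measure_preservingI lborel_pair.distr_pair_swap[symmetric]) measurable

lemma lborel_pair_shear_fst: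
  fixes f :: "real \<Rightarrow> real"
  assumes "f \<in> borel_measurable borel"
  shows "measure_preserving (lborel \<Otimes>\<^sub>M lborel) (\<lambda>(x, y). (x + f y, y))"
proof -
  have "measure_preserving (lborel \<Otimes>\<^sub>M lborel)
      (\<lambda>p. (\<lambda>(x, y). (y, x)) ((\<lambda>(x, y). (x, y + f x)) ((\<lambda>(x, y). (y, x)) p)))"
    by (rule measure_preserving_comp[OF measure_preserving_comp[OF lborel_pair_swap
          lborel_pair_shear[OF assms]] lborel_pair_swap])
  also have "(\<lambda>p. (\<lambda>(x, y). (y, x)) ((\<lambda>(x, y). (x, y + f x)) ((\<lambda>(x, y). (y, x)) p)))
      = (\<lambda>(x, y). (x + f y, y))"
    by (auto simp: fun_eq_iff)
  finally show ?thesis .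
qed

lemma lborel_pair_uminus:
  "measure_preserving (lborel \<Otimes>\<^sub>M lborel :: (real \<times> real) measure) (\<lambda>(x, y). (- x, - y))"
proof (rule measure_preservingI)
  have neg: "distr lborel lborel uminus = (lborel :: real measure)"
  proof -
    have "distr lborel lborel uminus = distr lborel borel (uminus :: real \<Rightarrow> real)"
      by (rule distr_cong) auto
    then show ?thesis by (simp add: lborel_distr_uminus)
  qed
  have "distr lborel lborel uminus \<Otimes>\<^sub>M distr lborel lborel uminus
     = distr (lborel \<Otimes>\<^sub>M lborel) (lborel \<Otimes>\<^sub>M lborel) (\<lambda>(x::real, y::real). (- x, - y))"
    by (rule pair_measure_distr) (simp_all add: neg lborel.sigma_finite_measure_axioms)
  then show "distr (lborel \<Otimes>\<^sub>M lborel) (lborel \<Otimes>\<^sub>M lborel) (\<lambda>(x::real, y::real). (- x, - y)) = lborel \<Otimes>\<^sub>M lborel"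
    by (simp add: neg)
qed measurable

definition rotation2 :: "real \<Rightarrow> real \<Rightarrow> real \<times> real \<Rightarrow> real \<times> real" where
  "rotation2 c s = (\<lambda>(x, y). (c * x - s * y, s * x + c * y))"

text \<open>Paeth's three-shear decomposition; each shear visibly preserves Lebesgue measure.\<close>
lemma rotation2_eq_shears:
  assumes cs: "c\<^sup>2 + s\<^sup>2 = 1" and "s \<noteq> 0"
  defines "a \<equiv> (c - 1) / s"
  shows "rotation2 c s = (\<lambda>p. (\<lambda>(x, y). (x + a * y, y)) ((\<lambda>(x, y). (x, y + s * x)) ((\<lambda>(x, y). (x + a * y, y)) p)))"
proof -
  have e1: "1 + a * s = c" using \<open>s \<noteq> 0\<close> by (simp add: a_def field_simps)
  have "a + a * c = (c\<^sup>2 - 1) / s" using \<open>s \<noteq> 0\<close> by (simp add: a_def field_simps power2_eq_square)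
  also have "\<dots> = - s" using cs \<open>s \<noteq> 0\<close> by (simp add: field_simps power2_eq_square)
  finally have e2: "a + a * c = - s" .
  have "x + a * y + a * (y + s * (x + a * y)) = x * (1 + a * s) + y * (a + a * (1 + a * s))"
    and "y + s * (x + a * y) = s * x + y * (1 + a * s)" for x y
    by (simp_all add: algebra_simps)
  then have "x + a * y + a * (y + s * (x + a * y)) = c * x - s * y"
    and "y + s * (x + a * y) = s * x + c * y" for x y
    unfolding e1 e2 by simp_all
  then show ?thesis by (auto simp: rotation2_def fun_eq_iff)
qed

lemma lborel_pair_rotation2:
  assumes cs: "c\<^sup>2 + s\<^sup>2 = 1"
  shows "measure_preserving (lborel \<Otimes>\<^sub>M lborel) (rotation2 c s)"
proof (cases "s = 0")
  case True
  then have "c = 1 \<or> c = -1" using cs by (simp add: power2_eq_1_iff)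
  then show ?thesis
  proof
    assume "c = 1"
    then have "rotation2 c s = (\<lambda>x. x)" using True by (auto simp: rotation2_def fun_eq_iff)
    then show ?thesis by (simp add: measure_preserving_id)
  next
    assume "c = -1"
    then have "rotation2 c s = (\<lambda>(x, y). (- x, - y))" using True by (auto simp: rotation2_def fun_eq_iff)
    then show ?thesis by (simp add: lborel_pair_uminus)
  qed
next
  case False
  let ?a = "(c - 1) / s"
  have "measure_preserving (lborel \<Otimes>\<^sub>M lborel)
      (\<lambda>p. (\<lambda>(x, y). (x + ?a * y, y)) ((\<lambda>(x, y). (x, y + s * x)) ((\<lambda>(x, y). (x + ?a * y, y)) p)))"
    by (rule measure_preserving_comp[OF measure_preserving_comp[OF
          lborel_pair_shear_fst[of "\<lambda>y. ?a * y"] lborel_pair_shear[of "\<lambda>x. s * x"]]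
          lborel_pair_shear_fst[of "\<lambda>y. ?a * y"]]) simp_all
  then show ?thesis
    by (simp only: rotation2_eq_shears[OF cs False])
qed

abbreviation std_normal :: "real measure" where
  "std_normal \<equiv> density lborel std_normal_density"

lemma prob_space_std_normal: "prob_space std_normal"
  by (rule prob_space_normal_density) simp

lemma std_normal_pair_eq_density:
  "std_normal \<Otimes>\<^sub>M std_normal =
     density (lborel \<Otimes>\<^sub>M lborel) (\<lambda>(x, y). ennreal (std_normal_density x * std_normal_density y))"
proof -
  have "std_normal \<Otimes>\<^sub>M std_normal =
      density (lborel \<Otimes>\<^sub>M lborel) (\<lambda>(x, y). ennreal (std_normal_density x) * ennreal (std_normal_density y))"
    by (rule pair_measure_density)
      (auto simp: lborel.sigma_finite_measure_axioms prob_space_std_normal prob_space_imp_sigma_finite)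
  then show ?thesis by (simp add: ennreal_mult case_prod_beta)
qed

lemma std_normal_density_rotation2:
  assumes cs: "c\<^sup>2 + s\<^sup>2 = 1"
  shows "(\<lambda>(x, y). std_normal_density x * std_normal_density y) (rotation2 c s p)
       = (\<lambda>(x, y). std_normal_density x * std_normal_density y) p"
proof -
  have prod: "std_normal_density x * std_normal_density y = exp (- (x\<^sup>2 + y\<^sup>2) / 2) / (2 * pi)" for x y
    by (simp add: std_normal_density_def exp_add[symmetric] add_divide_distrib power2_eq_square)
  obtain x y where p: "p = (x, y)" by (cases p)
  have "(c * x - s * y)\<^sup>2 + (s * x + c * y)\<^sup>2 = (c\<^sup>2 + s\<^sup>2) * (x\<^sup>2 + y\<^sup>2)"
    by (simp add: algebra_simps power2_eq_square)
  then have sq: "(c * x - s * y)\<^sup>2 + (s * x + c * y)\<^sup>2 = x\<^sup>2 + y\<^sup>2"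
    using cs by simp
  have "(\<lambda>(x, y). std_normal_density x * std_normal_density y) (rotation2 c s p)
      = exp (- ((c * x - s * y)\<^sup>2 + (s * x + c * y)\<^sup>2) / 2) / (2 * pi)"
    by (simp only: p rotation2_def prod case_prod_conv)
  also have "\<dots> = (\<lambda>(x, y). std_normal_density x * std_normal_density y) p"
    by (simp only: p sq prod case_prod_conv)
  finally show ?thesis .
qed

lemma std_normal_pair_rotation2:
  assumes cs: "c\<^sup>2 + s\<^sup>2 = 1"
  shows "measure_preserving (std_normal \<Otimes>\<^sub>M std_normal) (rotation2 c s)"
  unfolding std_normal_pair_eq_density
  by (rule measure_preserving_density[OF lborel_pair_rotation2[OF cs]])
     (use std_normal_density_rotation2[OF cs] in \<open>simp_all add: case_prod_beta\<close>)

section \<open>Givens rotations of the standard Gaussian measure on \<open>\<real>\<^sup>J\<close>\<close>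

definition givens :: "'i \<Rightarrow> 'i \<Rightarrow> real \<Rightarrow> real \<Rightarrow> ('i \<Rightarrow> real) \<Rightarrow> ('i \<Rightarrow> real)" where
  "givens i j c s x = x(i := c * x i - s * x j, j := s * x i + c * x j)"

abbreviation std_gauss :: "'i set \<Rightarrow> ('i \<Rightarrow> real) measure" where
  "std_gauss J \<equiv> PiM J (\<lambda>_. std_normal)"

interpretation std_normal: product_sigma_finite "\<lambda>_. std_normal"
  unfolding product_sigma_finite_def
  using prob_space_std_normal by (auto simp: prob_space_imp_sigma_finite)

lemma prob_space_std_gauss: "finite J \<Longrightarrow> prob_space (std_gauss J)"
  by (intro prob_space_PiM prob_space_std_normal)

lemma givens_measurable:
  assumes "i \<in> J" "j \<in> J"
  shows "givens i j c s \<in> measurable (std_gauss J) (std_gauss J)"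
proof -
  have "givens i j c s = (\<lambda>x k. if k = j then s * x i + c * x j else if k = i then c * x i - s * x j else x k)"
    by (auto simp: givens_def fun_eq_iff)
  also have "\<dots> \<in> measurable (std_gauss J) (std_gauss J)"
    using assms by (intro measurable_PiM_single') (auto simp: space_PiM PiE_iff extensional_def)
  finally show ?thesis .
qed

definition pair_to_fun :: "'i \<Rightarrow> 'i \<Rightarrow> real \<times> real \<Rightarrow> ('i \<Rightarrow> real)" where
  "pair_to_fun i j = (\<lambda>(a, b). \<lambda>k\<in>{i, j}. if k = i then a else b)"

lemma pair_to_fun_measurable:
  "pair_to_fun i j \<in> measurable (std_normal \<Otimes>\<^sub>M std_normal) (std_gauss {i, j})"
proof -
  have "pair_to_fun i j = (\<lambda>p k. if k \<in> {i, j} then (if k = i then fst p else snd p) else undefined)"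
    by (auto simp: pair_to_fun_def fun_eq_iff)
  also have "\<dots> \<in> measurable (std_normal \<Otimes>\<^sub>M std_normal) (std_gauss {i, j})"
    by (rule measurable_PiM_single') (auto simp: space_PiM PiE_iff extensional_def)
  finally show ?thesis .
qed

lemma distr_pair_to_fun:
  assumes "i \<noteq> j"
  shows "distr (std_normal \<Otimes>\<^sub>M std_normal) (std_gauss {i, j}) (pair_to_fun i j) = std_gauss {i, j}"
proof (rule std_normal.PiM_eqI)
  fix A assume A: "\<And>k. k \<in> {i, j} \<Longrightarrow> A k \<in> sets std_normal"
  have "pair_to_fun i j -` Pi\<^sub>E {i, j} A \<inter> space (std_normal \<Otimes>\<^sub>M std_normal) = A i \<times> A j"
    using assms by (auto simp: pair_to_fun_def space_pair_measure PiE_iff)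
  then have "emeasure (distr (std_normal \<Otimes>\<^sub>M std_normal) (std_gauss {i, j}) (pair_to_fun i j)) (Pi\<^sub>E {i, j} A)
      = emeasure (std_normal \<Otimes>\<^sub>M std_normal) (A i \<times> A j)"
    using A pair_to_fun_measurable[of i j] by (subst emeasure_distr) auto
  also have "\<dots> = (\<Prod>k\<in>{i, j}. emeasure std_normal (A k))"
    using A assms by (subst std_normal.emeasure_pair_measure_Times) auto
  finally show "emeasure (distr (std_normal \<Otimes>\<^sub>M std_normal) (std_gauss {i, j}) (pair_to_fun i j)) (Pi\<^sub>E {i, j} A)
      = (\<Prod>k\<in>{i, j}. emeasure std_normal (A k))" .
qed simp_all

lemma std_gauss_pair_givens:
  assumes ij: "i \<noteq> j" and cs: "c\<^sup>2 + s\<^sup>2 = 1"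
  shows "measure_preserving (std_gauss {i, j}) (givens i j c s)"
proof (rule measure_preservingI)
  let ?N = "std_normal \<Otimes>\<^sub>M std_normal"
  show gm: "givens i j c s \<in> measurable (std_gauss {i, j}) (std_gauss {i, j})"
    by (rule givens_measurable) auto
  have "distr (std_gauss {i, j}) (std_gauss {i, j}) (givens i j c s)
      = distr (distr ?N (std_gauss {i, j}) (pair_to_fun i j)) (std_gauss {i, j}) (givens i j c s)"
    by (simp add: distr_pair_to_fun[OF ij])
  also have "\<dots> = distr ?N (std_gauss {i, j}) (\<lambda>p. givens i j c s (pair_to_fun i j p))"
    using distr_distr[OF gm pair_to_fun_measurable] by (simp add: comp_def)
  also have "\<dots> = distr ?N (std_gauss {i, j}) (\<lambda>p. pair_to_fun i j (rotation2 c s p))"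
    using ij by (intro arg_cong[where f = "distr ?N (std_gauss {i, j})"])
      (auto simp: givens_def pair_to_fun_def rotation2_def fun_eq_iff)
  also have "\<dots> = std_gauss {i, j}"
    by (simp add: distr_measure_preserving[OF std_normal_pair_rotation2[OF cs] pair_to_fun_measurable]
        distr_pair_to_fun[OF ij])
  finally show "distr (std_gauss {i, j}) (std_gauss {i, j}) (givens i j c s) = std_gauss {i, j}" .
qed

lemma std_gauss_givens:
  assumes J: "finite J" and ij: "i \<in> J" "j \<in> J" "i \<noteq> j" and cs: "c\<^sup>2 + s\<^sup>2 = 1"
  shows "measure_preserving (std_gauss J) (givens i j c s)"
proof (rule measure_preservingI)
  define R where "R = J - {i, j}"
  have JR: "J = {i, j} \<union> R" and dis: "{i, j} \<inter> R = {}" and fR: "finite R"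
    using ij J by (auto simp: R_def)
  let ?P = "std_gauss {i, j} \<Otimes>\<^sub>M std_gauss R"
  show gm: "givens i j c s \<in> measurable (std_gauss J) (std_gauss J)"
    by (rule givens_measurable[OF ij(1,2)])
  have merge: "distr ?P (std_gauss J) (merge {i, j} R) = std_gauss J"
    unfolding JR by (rule std_normal.distr_merge) (use dis fR in auto)
  have mm: "merge {i, j} R \<in> measurable ?P (std_gauss J)"
    unfolding JR by (rule measurable_merge)
  have "distr (std_gauss J) (std_gauss J) (givens i j c s)
      = distr ?P (std_gauss J) (\<lambda>p. givens i j c s (merge {i, j} R p))"
    using distr_distr[OF gm mm] by (simp add: comp_def merge)
  also have "\<dots> = distr ?P (std_gauss J) (\<lambda>p. merge {i, j} R ((\<lambda>(u, v). (givens i j c s u, v)) p))"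
    using dis ij(3) by (intro arg_cong[where f = "distr ?P (std_gauss J)"])
      (auto simp: givens_def merge_def fun_eq_iff)
  also have "\<dots> = std_gauss J"
    using distr_measure_preserving[OF measure_preserving_pair_fst[OF std_gauss_pair_givens[OF ij(3) cs]] mm]
      prob_space_std_gauss[OF fR] by (simp add: prob_space_imp_sigma_finite merge)
  finally show "distr (std_gauss J) (std_gauss J) (givens i j c s) = std_gauss J" .
qed

inductive_set givens_rotations :: "'i set \<Rightarrow> (('i \<Rightarrow> real) \<Rightarrow> ('i \<Rightarrow> real)) set" for J where
  id: "(\<lambda>x. x) \<in> givens_rotations J"
| step: "Q \<in> givens_rotations J \<Longrightarrow> i \<in> J \<Longrightarrow> j \<in> J \<Longrightarrow> i \<noteq> j \<Longrightarrow> c\<^sup>2 + s\<^sup>2 = 1 \<Longrightarrow>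
    (\<lambda>x. givens i j c s (Q x)) \<in> givens_rotations J"

lemma givens_rotations_mono: "Q \<in> givens_rotations J' \<Longrightarrow> J' \<subseteq> J \<Longrightarrow> Q \<in> givens_rotations J"
  by (induction rule: givens_rotations.induct) (auto intro: givens_rotations.intros)

lemma givens_rotations_comp:
  "Q2 \<in> givens_rotations J \<Longrightarrow> Q1 \<in> givens_rotations J \<Longrightarrow> (\<lambda>x. Q2 (Q1 x)) \<in> givens_rotations J"
proof (induction rule: givens_rotations.induct)
  case (step Q i j c s)
  then show ?case using givens_rotations.step[of "\<lambda>x. Q (Q1 x)" J i j c s] by simp
qed simp

lemma givens_rotations_measure_preserving:
  "Q \<in> givens_rotations J \<Longrightarrow> finite J \<Longrightarrow> measure_preserving (std_gauss J) Q"
proof (induction rule: givens_rotations.induct)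
  case id
  show ?case by (rule measure_preserving_id)
next
  case (step Q i j c s)
  then show ?case by (intro measure_preserving_comp[OF _ std_gauss_givens]) auto
qed

lemma givens_rotations_outside: "Q \<in> givens_rotations J \<Longrightarrow> k \<notin> J \<Longrightarrow> Q x k = x k"
  by (induction rule: givens_rotations.induct) (auto simp: givens_def)

lemma givens_rotations_fix:
  "Q \<in> givens_rotations J \<Longrightarrow> (\<And>k. k \<in> J \<Longrightarrow> x k = 0) \<Longrightarrow> Q x = x"
  by (induction rule: givens_rotations.induct) (auto simp: givens_def fun_upd_idem)

lemma givens_rotations_add:
  "Q \<in> givens_rotations J \<Longrightarrow> Q (\<lambda>k. x k + y k) = (\<lambda>k. Q x k + Q y k)"
  by (induction rule: givens_rotations.induct) (simp_all add: givens_def fun_eq_iff algebra_simps)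

definition inner_on :: "'i set \<Rightarrow> ('i \<Rightarrow> real) \<Rightarrow> ('i \<Rightarrow> real) \<Rightarrow> real" where
  "inner_on K x y = (\<Sum>k\<in>K. x k * y k)"

lemma inner_on_self: "inner_on K x x = (\<Sum>k\<in>K. (x k)\<^sup>2)"
  by (simp add: inner_on_def power2_eq_square)

lemma inner_on_single:
  assumes "finite K" "i \<in> K" "\<And>k. k \<in> K \<Longrightarrow> k \<noteq> i \<Longrightarrow> y k = 0"
  shows "inner_on K x y = x i * y i"
proof -
  have "inner_on K x y = (\<Sum>k\<in>K. if k = i then x i * y i else 0)"
    unfolding inner_on_def by (rule sum.cong) (auto simp: assms(3))
  then show ?thesis using assms(1,2) by simp
qed

lemma inner_on_givens:
  assumes K: "finite K" and ij: "i \<in> K" "j \<in> K" "i \<noteq> j" and cs: "c\<^sup>2 + s\<^sup>2 = 1"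
  shows "inner_on K (givens i j c s x) (givens i j c s y) = inner_on K x y"
proof -
  have split: "(\<Sum>k\<in>K. f k) = f i + f j + (\<Sum>k\<in>K - {i, j}. f k)" for f :: "_ \<Rightarrow> real"
  proof -
    have "(\<Sum>k\<in>K. f k) = f i + (\<Sum>k\<in>K - {i}. f k)"
      using K ij by (simp add: sum.remove)
    also have "(\<Sum>k\<in>K - {i}. f k) = f j + (\<Sum>k\<in>K - {i} - {j}. f k)"
      using K ij by (simp add: sum.remove)
    finally show ?thesis by (simp add: Diff_insert2 [symmetric] insert_commute)
  qed
  have "(c * x i - s * x j) * (c * y i - s * y j) + (s * x i + c * x j) * (s * y i + c * y j)
      = (c\<^sup>2 + s\<^sup>2) * (x i * y i + x j * y j)"
    by (simp add: algebra_simps power2_eq_square)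
  moreover have "(\<Sum>k\<in>K - {i, j}. givens i j c s x k * givens i j c s y k) = (\<Sum>k\<in>K - {i, j}. x k * y k)"
    by (rule sum.cong) (auto simp: givens_def)
  ultimately show ?thesis
    unfolding inner_on_def split[of "\<lambda>k. givens i j c s x k * givens i j c s y k"] split[of "\<lambda>k. x k * y k"]
    using ij cs by (simp add: givens_def)
qed

lemma givens_rotations_inner:
  "Q \<in> givens_rotations J \<Longrightarrow> finite K \<Longrightarrow> J \<subseteq> K \<Longrightarrow> inner_on K (Q x) (Q y) = inner_on K x y"
proof (induction rule: givens_rotations.induct)
  case (step Q i j c s)
  then show ?case using inner_on_givens[of K i j c s "Q x" "Q y"] by auto
qed simp

lemma givens_rotation_to_axis:
  fixes v :: "'i \<Rightarrow> real"
  assumes "finite J" "i \<in> J"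
  shows "\<exists>Q\<in>givens_rotations J. \<forall>k\<in>J - {i}. Q v k = 0"
proof -
  have "\<exists>Q\<in>givens_rotations (insert i D). \<forall>k\<in>D - {i}. Q v k = 0" if "finite D" for D
    using that
  proof (induction D rule: finite_induct)
    case empty
    show ?case by (intro bexI[of _ "\<lambda>x. x"]) (auto intro: givens_rotations.id)
  next
    case (insert j D)
    then obtain Q where Q: "Q \<in> givens_rotations (insert i (insert j D))"
      and zero: "\<forall>k\<in>D - {i}. Q v k = 0"
      by (blast intro: givens_rotations_mono)
    define r where "r = sqrt ((Q v i)\<^sup>2 + (Q v j)\<^sup>2)"
    show ?case
    proof (cases "j = i \<or> r = 0")
      case True
      then have "j = i \<or> Q v j = 0" by (auto simp: r_def add_nonneg_eq_0_iff)
      then show ?thesis using Q zero by (intro bexI[of _ Q]) auto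
    next
      case False
      define c where "c = Q v i / r"
      define s where "s = - Q v j / r"
      have "c\<^sup>2 + s\<^sup>2 = ((Q v i)\<^sup>2 + (Q v j)\<^sup>2) / r\<^sup>2"
        by (simp add: c_def s_def power_divide add_divide_distrib)
      then have cs: "c\<^sup>2 + s\<^sup>2 = 1" using False by (simp add: r_def)
      have "s * Q v i + c * Q v j = 0" by (simp add: c_def s_def field_simps)
      then have "\<forall>k\<in>insert j D - {i}. givens i j c s (Q v) k = 0"
        using zero False by (auto simp: givens_def)
      moreover have "(\<lambda>x. givens i j c s (Q x)) \<in> givens_rotations (insert i (insert j D))"
        using False cs by (intro givens_rotations.step[OF Q]) auto
      ultimately show ?thesis by (intro bexI[of _ "\<lambda>x. givens i j c s (Q x)"]) auto
    qed
  qed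
  from this[OF \<open>finite J\<close>] show ?thesis
    using \<open>i \<in> J\<close> by (simp add: insert_absorb)
qed

lemma givens_rotation_unit_to_axis:
  assumes K: "finite K" and JK: "J \<subseteq> K" and v: "\<And>k. k \<in> K - J \<Longrightarrow> v k = 0"
    and unit: "inner_on K v v = 1"
  obtains i Q where "i \<in> J" "Q \<in> givens_rotations J" "\<And>k. k \<in> K \<Longrightarrow> k \<noteq> i \<Longrightarrow> Q v k = 0"
    "(Q v i)\<^sup>2 = 1"
proof -
  have "J \<noteq> {}"
  proof
    assume "J = {}"
    then have "inner_on K v v = 0" using v by (simp add: inner_on_def)
    then show False using unit by simp
  qed
  then obtain i where i: "i \<in> J" by auto
  obtain Q where Q: "Q \<in> givens_rotations J" and zero: "\<forall>k\<in>J - {i}. Q v k = 0"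
    using givens_rotation_to_axis[OF finite_subset[OF JK K] i] by blast
  have axis: "Q v k = 0" if "k \<in> K" "k \<noteq> i" for k
    using zero that v givens_rotations_outside[OF Q, of k v] by (cases "k \<in> J") auto
  have "inner_on K (Q v) (Q v) = Q v i * Q v i"
    using i JK K axis by (intro inner_on_single) auto
  then have "(Q v i)\<^sup>2 = 1"
    using givens_rotations_inner[OF Q K JK, of v v] unit by (simp add: power2_eq_square)
  then show ?thesis using that i Q axis by blast
qed

lemma givens_rotation_orthonormal_to_axes:
  fixes w :: "'t \<Rightarrow> 'i \<Rightarrow> real"
  assumes "finite T" "finite K" "J \<subseteq> K"
    and "\<And>a k. a \<in> T \<Longrightarrow> k \<in> K - J \<Longrightarrow> w a k = 0"
    and "\<And>a b. a \<in> T \<Longrightarrow> b \<in> T \<Longrightarrow> inner_on K (w a) (w b) = (if a = b then 1 else 0)"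
  shows "\<exists>Q\<in>givens_rotations J. \<exists>\<iota>. inj_on \<iota> T \<and> \<iota> ` T \<subseteq> J \<and>
           (\<forall>a\<in>T. \<forall>k\<in>K. k \<noteq> \<iota> a \<longrightarrow> Q (w a) k = 0)"
  using assms
proof (induction T arbitrary: J w rule: finite_induct)
  case empty
  show ?case by (intro bexI[of _ "\<lambda>x. x"]) (auto intro: givens_rotations.id)
next
  case (insert a T)
  note K = \<open>finite K\<close> and JK = \<open>J \<subseteq> K\<close> and outside = insert.prems(3) and orth = insert.prems(4)
  obtain i Q1 where i: "i \<in> J" and Q1: "Q1 \<in> givens_rotations J"
    and axis: "\<And>k. k \<in> K \<Longrightarrow> k \<noteq> i \<Longrightarrow> Q1 (w a) k = 0" and unit: "(Q1 (w a) i)\<^sup>2 = 1"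
    using givens_rotation_unit_to_axis[OF K JK, of "w a"] outside orth[of a a] by auto
  have inner_Q1: "inner_on K (Q1 x) (Q1 y) = inner_on K x y" for x y
    by (rule givens_rotations_inner[OF Q1 K JK])
  have "Q1 (w b) i = 0" if "b \<in> T" for b
  proof -
    have "Q1 (w b) i * Q1 (w a) i = inner_on K (Q1 (w b)) (Q1 (w a))"
      using i JK K axis by (intro inner_on_single[symmetric]) auto
    also have "\<dots> = 0"
      using inner_Q1 orth[of b a] that insert.hyps(2) by auto
    finally show ?thesis using unit by auto
  qed
  then have IH_outside: "\<And>b k. b \<in> T \<Longrightarrow> k \<in> K - (J - {i}) \<Longrightarrow> Q1 (w b) k = 0"
    using outside givens_rotations_outside[OF Q1] by (metis Diff_iff insertCI singletonD)
  have IH_orth: "\<And>b b'. b \<in> T \<Longrightarrow> b' \<in> T \<Longrightarrow>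
      inner_on K (Q1 (w b)) (Q1 (w b')) = (if b = b' then 1 else 0)"
    using inner_Q1 orth by auto
  have "\<exists>Q\<in>givens_rotations (J - {i}). \<exists>\<iota>. inj_on \<iota> T \<and> \<iota> ` T \<subseteq> J - {i} \<and>
      (\<forall>b\<in>T. \<forall>k\<in>K. k \<noteq> \<iota> b \<longrightarrow> Q (Q1 (w b)) k = 0)"
    using JK by (intro insert.IH[OF K _ IH_outside IH_orth]) auto
  then obtain Q2 \<iota> where Q2: "Q2 \<in> givens_rotations (J - {i})" and inj: "inj_on \<iota> T"
    and img: "\<iota> ` T \<subseteq> J - {i}" and zero: "\<forall>b\<in>T. \<forall>k\<in>K. k \<noteq> \<iota> b \<longrightarrow> Q2 (Q1 (w b)) k = 0"
    by blast
  have fix_a: "Q2 (Q1 (w a)) = Q1 (w a)"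
    using givens_rotations_fix[OF Q2] axis JK by auto
  have Q: "(\<lambda>x. Q2 (Q1 x)) \<in> givens_rotations J"
    using givens_rotations_comp[OF givens_rotations_mono[OF Q2] Q1] by auto
  have "i \<notin> \<iota> ` T" using img by auto
  then have inj': "inj_on (\<iota>(a := i)) (insert a T)"
    using inj insert.hyps(2) by (auto simp: inj_on_def)
  have img': "\<iota>(a := i) ` insert a T \<subseteq> J"
    using img i insert.hyps(2) by auto
  have zero': "\<forall>b\<in>insert a T. \<forall>k\<in>K. k \<noteq> (\<iota>(a := i)) b \<longrightarrow> Q2 (Q1 (w b)) k = 0"
  proof (intro ballI impI)
    fix b k assume "b \<in> insert a T" "k \<in> K" "k \<noteq> (\<iota>(a := i)) b"
    then show "Q2 (Q1 (w b)) k = 0"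
      using zero fix_a axis insert.hyps(2) by (cases "b = a") auto
  qed
  show ?case by (intro bexI[OF _ Q] exI[of _ "\<iota>(a := i)"] conjI inj' img' zero')
qed

definition proj_sq_norm :: "'i set \<Rightarrow> 't set \<Rightarrow> ('t \<Rightarrow> 'i \<Rightarrow> real) \<Rightarrow> ('i \<Rightarrow> real) \<Rightarrow> real" where
  "proj_sq_norm K T w y = (\<Sum>a\<in>T. (inner_on K y (w a))\<^sup>2)"

lemma givens_rotation_projection:
  fixes w :: "'t \<Rightarrow> 'i \<Rightarrow> real"
  assumes T: "finite T" and K: "finite K"
    and orth: "\<And>a b. a \<in> T \<Longrightarrow> b \<in> T \<Longrightarrow> inner_on K (w a) (w b) = (if a = b then 1 else 0)"
  obtains Q A where "Q \<in> givens_rotations K" "A \<subseteq> K" "card A = card T"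
    "\<And>y. proj_sq_norm K T w y = (\<Sum>k\<in>A. (Q y k)\<^sup>2)"
proof -
  obtain Q \<iota> where Q: "Q \<in> givens_rotations K" and inj: "inj_on \<iota> T" and img: "\<iota> ` T \<subseteq> K"
    and axis: "\<forall>a\<in>T. \<forall>k\<in>K. k \<noteq> \<iota> a \<longrightarrow> Q (w a) k = 0"
    using givens_rotation_orthonormal_to_axes[OF T K order_refl _ orth] by blast
  have inner_Q: "inner_on K (Q x) (Q y) = inner_on K x y" for x y
    by (rule givens_rotations_inner[OF Q K order_refl])
  have single: "inner_on K x (Q (w a)) = x (\<iota> a) * Q (w a) (\<iota> a)" if "a \<in> T" for x a
    using that img axis K by (intro inner_on_single) auto
  have "(inner_on K y (w a))\<^sup>2 = (Q y (\<iota> a))\<^sup>2" if a: "a \<in> T" for y a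
  proof -
    have "(Q (w a) (\<iota> a))\<^sup>2 = 1"
      using single[OF a, of "Q (w a)"] inner_Q[of "w a" "w a"] orth[OF a a] by (simp add: power2_eq_square)
    moreover have "inner_on K y (w a) = Q y (\<iota> a) * Q (w a) (\<iota> a)"
      using inner_Q[of y "w a"] single[OF a, of "Q y"] by simp
    ultimately show ?thesis by (simp add: power_mult_distrib)
  qed
  then have "proj_sq_norm K T w y = (\<Sum>k\<in>\<iota> ` T. (Q y k)\<^sup>2)" for y
    using sum.reindex[OF inj, of "\<lambda>k. (Q y k)\<^sup>2"] by (simp add: proj_sq_norm_def)
  then show ?thesis
    using that[OF Q img card_image[OF inj]] by blast
qed

lemma givens_rotation_to_nonneg_axis:
  fixes m :: "'i \<Rightarrow> real"
  assumes A: "finite A" and ij: "i \<in> A" "j \<in> A" "i \<noteq> j"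
  obtains Q where "Q \<in> givens_rotations A"
    "\<And>k. k \<in> A \<Longrightarrow> Q m k = (if k = i then sqrt (\<Sum>k\<in>A. (m k)\<^sup>2) else 0)"
proof -
  obtain Q1 where Q1: "Q1 \<in> givens_rotations A" and zero1: "\<forall>k\<in>A - {i}. Q1 m k = 0"
    using givens_rotation_to_axis[OF A ij(1)] by blast
  \<comment> \<open>if necessary, the rotation by \<open>\<pi>\<close> in the \<open>(i, j)\<close>-plane makes \<open>Q m i\<close> nonnegative\<close>
  obtain Q where Q: "Q \<in> givens_rotations A" and zero: "\<forall>k\<in>A - {i}. Q m k = 0" and pos: "Q m i \<ge> 0"
  proof (cases "Q1 m i \<ge> 0")
    case True
    then show ?thesis using that Q1 zero1 by blast
  next
    case False
    have "(\<lambda>x. givens i j (-1) 0 (Q1 x)) \<in> givens_rotations A"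
      by (rule givens_rotations.step[OF Q1 ij]) simp
    then show ?thesis
      by (rule that) (use False zero1 ij in \<open>auto simp: givens_def\<close>)
  qed
  have "(\<Sum>k\<in>A. (Q m k)\<^sup>2) = (\<Sum>k\<in>A. (m k)\<^sup>2)"
    using givens_rotations_inner[OF Q A order_refl, of m m] by (simp add: inner_on_self)
  moreover have "(\<Sum>k\<in>A. (Q m k)\<^sup>2) = (Q m i)\<^sup>2"
    using A ij(1) zero by (subst sum.remove[of A i]) auto
  ultimately have "Q m i = sqrt (\<Sum>k\<in>A. (m k)\<^sup>2)"
    using pos by (simp add: real_sqrt_unique)
  then show ?thesis
    using that[OF Q] zero by auto
qed

section \<open>Chi-square and F laws of Gaussian quadratic forms\<close>

lemma std_gauss_reindex_nc_chi2:
  assumes f: "bij_betw f {..<n} A"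
  shows "distr (std_gauss A) borel (\<lambda>y. \<Sum>k\<in>A. (y k + (if k = f 0 then sqrt lam else 0))\<^sup>2)
       = nc_chi2 n lam"
proof -
  define R where "R = (\<lambda>y::_ \<Rightarrow> real. \<lambda>i\<in>{..<n}. y (f i))"
  define H where "H = (\<lambda>x::nat \<Rightarrow> real. \<Sum>i<n. (x i + (if i = 0 then sqrt lam else 0))\<^sup>2)"
  have inj: "inj_on f {..<n}" and img: "f ` {..<n} = A"
    using f by (auto simp: bij_betw_def)
  have R: "R \<in> measurable (std_gauss A) (std_gauss {..<n})"
    unfolding R_def using img by (intro measurable_restrict measurable_component_singleton) auto
  have H [measurable]: "H \<in> borel_measurable (std_gauss {..<n})"
    unfolding H_def by measurable
  have "(\<Sum>k\<in>A. (y k + (if k = f 0 then sqrt lam else 0))\<^sup>2) = H (R y)" for y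
  proof -
    have "(\<Sum>k\<in>A. (y k + (if k = f 0 then sqrt lam else 0))\<^sup>2)
        = (\<Sum>i<n. (y (f i) + (if f i = f 0 then sqrt lam else 0))\<^sup>2)"
      using sum.reindex_bij_betw[OF f, of "\<lambda>k. (y k + (if k = f 0 then sqrt lam else 0))\<^sup>2"] by simp
    also have "\<dots> = H (R y)"
      unfolding H_def R_def using inj by (intro sum.cong) (auto simp: inj_on_eq_iff)
    finally show ?thesis .
  qed
  then have "distr (std_gauss A) borel (\<lambda>y. \<Sum>k\<in>A. (y k + (if k = f 0 then sqrt lam else 0))\<^sup>2)
      = distr (distr (std_gauss A) (std_gauss {..<n}) R) borel H"
    using distr_distr[OF H R] by (simp add: comp_def)
  also have "distr (std_gauss A) (std_gauss {..<n}) R = std_gauss {..<n}"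
    unfolding R_def using distr_PiM_reindex[of A "\<lambda>_. std_normal" f "{..<n}"] inj img prob_space_std_normal
    by auto
  also have "distr (std_gauss {..<n}) borel H = nc_chi2 n lam"
    unfolding nc_chi2_def H_def by (rule distr_cong) auto
  finally show ?thesis .
qed

lemma std_gauss_sum_sq_shift_nc_chi2:
  fixes m :: "'i \<Rightarrow> real"
  assumes A: "finite A" and card: "card A \<ge> 2"
  shows "distr (std_gauss A) borel (\<lambda>y. \<Sum>k\<in>A. (y k + m k)\<^sup>2) = nc_chi2 (card A) (\<Sum>k\<in>A. (m k)\<^sup>2)"
proof -
  define lam where "lam = (\<Sum>k\<in>A. (m k)\<^sup>2)"
  obtain f where f: "bij_betw f {..<card A} A"
    using ex_bij_betw_nat_finite[OF A] by (auto simp: atLeast0LessThan)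
  have ij: "f 0 \<in> A" "f 1 \<in> A" "f 0 \<noteq> f 1"
    using card f by (auto simp: bij_betw_def inj_on_eq_iff)
  obtain Q where Q: "Q \<in> givens_rotations A"
    and Qm: "\<And>k. k \<in> A \<Longrightarrow> Q m k = (if k = f 0 then sqrt lam else 0)"
    using givens_rotation_to_nonneg_axis[OF A ij, where m = m] unfolding lam_def by blast
  define F where "F = (\<lambda>y::'i \<Rightarrow> real. \<Sum>k\<in>A. (y k + (if k = f 0 then sqrt lam else 0))\<^sup>2)"
  have [measurable]: "F \<in> borel_measurable (std_gauss A)"
    unfolding F_def by measurable
  have "(\<Sum>k\<in>A. (y k + m k)\<^sup>2) = F (Q y)" for y
  proof -
    have "(\<Sum>k\<in>A. (y k + m k)\<^sup>2) = inner_on A (Q (\<lambda>k. y k + m k)) (Q (\<lambda>k. y k + m k))"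
      unfolding givens_rotations_inner[OF Q A order_refl] by (rule inner_on_self[symmetric])
    also have "\<dots> = F (Q y)"
      unfolding F_def inner_on_self givens_rotations_add[OF Q] by (intro sum.cong) (simp_all add: Qm)
    finally show ?thesis .
  qed
  then have "distr (std_gauss A) borel (\<lambda>y. \<Sum>k\<in>A. (y k + m k)\<^sup>2) = distr (std_gauss A) borel F"
    using distr_measure_preserving[OF givens_rotations_measure_preserving[OF Q A], of F borel] by simp
  also have "\<dots> = nc_chi2 (card A) lam"
    unfolding F_def by (rule std_gauss_reindex_nc_chi2[OF f])
  finally show ?thesis by (simp add: lam_def)
qed

lemma std_gauss_ratio_nc_F:
  fixes m :: "'i \<Rightarrow> real"
  assumes A: "finite A" and B: "finite B" and AB: "A \<inter> B = {}"
    and "card A \<ge> 2" and "card B \<ge> 2"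
  shows "distr (std_gauss (A \<union> B)) borel
           (\<lambda>y. ((\<Sum>k\<in>A. (y k + m k)\<^sup>2) / real (card A)) / ((\<Sum>k\<in>B. (y k)\<^sup>2) / real (card B)))
       = nc_F (card A) (card B) (\<Sum>k\<in>A. (m k)\<^sup>2)"
    (is "distr _ _ ?H = _")
proof -
  let ?P = "std_gauss A \<Otimes>\<^sub>M std_gauss B"
  define SA where "SA = (\<lambda>y::'i \<Rightarrow> real. \<Sum>k\<in>A. (y k + m k)\<^sup>2)"
  define SB where "SB = (\<lambda>y::'i \<Rightarrow> real. \<Sum>k\<in>B. (y k)\<^sup>2)"
  define ratio where "ratio = (\<lambda>(a::real, b::real). (a / real (card A)) / (b / real (card B)))"
  have [measurable]: "SA \<in> borel_measurable (std_gauss A)" "SB \<in> borel_measurable (std_gauss B)"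
    unfolding SA_def SB_def by measurable
  have ratio: "ratio \<in> borel_measurable (borel \<Otimes>\<^sub>M borel)"
    unfolding ratio_def by measurable
  have H: "?H \<in> borel_measurable (std_gauss (A \<union> B))"
    by measurable
  have S: "(\<lambda>(u, v). (SA u, SB v)) \<in> measurable ?P (borel \<Otimes>\<^sub>M borel)"
    by measurable
  have merge: "merge A B \<in> measurable ?P (std_gauss (A \<union> B))"
    by (rule measurable_merge)
  have H_merge: "?H (merge A B p) = ratio ((\<lambda>(u, v). (SA u, SB v)) p)" for p
  proof -
    obtain u v where p: "p = (u, v)" by (cases p)
    have "(\<Sum>k\<in>A. (merge A B p k + m k)\<^sup>2) = SA u" "(\<Sum>k\<in>B. (merge A B p k)\<^sup>2) = SB v"
      unfolding SA_def SB_def p using AB by (auto intro!: sum.cong simp: merge_def)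
    then show ?thesis by (simp add: ratio_def p)
  qed
  have "distr (std_gauss (A \<union> B)) borel ?H = distr (distr ?P (std_gauss (A \<union> B)) (merge A B)) borel ?H"
    by (simp only: std_normal.distr_merge[OF AB A B])
  also have "\<dots> = distr ?P borel (\<lambda>p. ratio ((\<lambda>(u, v). (SA u, SB v)) p))"
    using distr_distr[OF H merge] by (simp only: comp_def H_merge)
  also have "\<dots> = distr (distr ?P (borel \<Otimes>\<^sub>M borel) (\<lambda>(u, v). (SA u, SB v))) borel ratio"
    using distr_distr[OF ratio S] by (simp only: comp_def)
  also have "distr ?P (borel \<Otimes>\<^sub>M borel) (\<lambda>(u, v). (SA u, SB v))
      = distr (std_gauss A) borel SA \<Otimes>\<^sub>M distr (std_gauss B) borel SB"
    using prob_space_std_gauss[OF B]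
    by (intro pair_measure_distr[symmetric]) (simp_all add: prob_space_imp_sigma_finite prob_space.prob_space_distr)
  also have "distr (std_gauss A) borel SA = nc_chi2 (card A) (\<Sum>k\<in>A. (m k)\<^sup>2)"
    unfolding SA_def using assms by (intro std_gauss_sum_sq_shift_nc_chi2) auto
  also have "distr (std_gauss B) borel SB = nc_chi2 (card B) 0"
    using std_gauss_sum_sq_shift_nc_chi2[OF B, of "\<lambda>_. 0"] assms unfolding SB_def by simp
  finally show ?thesis
    unfolding nc_F_def ratio_def .
qed

definition proj_F_stat :: "'i set \<Rightarrow> 't set \<Rightarrow> ('t \<Rightarrow> 'i \<Rightarrow> real) \<Rightarrow> ('i \<Rightarrow> real) \<Rightarrow> real" where
  "proj_F_stat K T w y =
     (proj_sq_norm K T w y / real (card T)) /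
     ((inner_on K y y - proj_sq_norm K T w y) / real (card K - card T))"

lemma proj_F_stat_shift_measurable:
  "(\<lambda>y. proj_F_stat K T w (\<lambda>k. y k + m k)) \<in> borel_measurable (std_gauss K)"
  unfolding proj_F_stat_def proj_sq_norm_def inner_on_def by measurable

lemma inner_on_scale: "inner_on K (\<lambda>k. x k / c) (\<lambda>k. y k / c) = inner_on K x y / c\<^sup>2"
  by (simp add: inner_on_def sum_divide_distrib power2_eq_square)

lemma proj_sq_norm_scale: "proj_sq_norm K T w (\<lambda>k. x k / c) = proj_sq_norm K T w x / c\<^sup>2"
proof -
  have "inner_on K (\<lambda>k. x k / c) v = inner_on K x v / c" for v
    by (simp add: inner_on_def sum_divide_distrib)
  then show ?thesis
    by (simp add: proj_sq_norm_def power_divide sum_divide_distrib)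
qed

lemma proj_F_stat_scale:
  assumes "c \<noteq> 0"
  shows "proj_F_stat K T w (\<lambda>k. x k / c) = proj_F_stat K T w x"
proof -
  have "inner_on K x x / c\<^sup>2 - proj_sq_norm K T w x / c\<^sup>2 = (inner_on K x x - proj_sq_norm K T w x) / c\<^sup>2"
    by (simp add: diff_divide_distrib)
  then show ?thesis
    using assms by (simp add: proj_F_stat_def inner_on_scale proj_sq_norm_scale)
qed

lemma proj_F_stat_cong:
  "(\<And>k. k \<in> K \<Longrightarrow> x k = y k) \<Longrightarrow> proj_F_stat K T w x = proj_F_stat K T w y"
  by (simp add: proj_F_stat_def proj_sq_norm_def inner_on_def)

text \<open>A two-block instance of Cochran's theorem.\<close>
lemma std_gauss_proj_F_stat_nc_F:
  fixes w :: "'t \<Rightarrow> 'i \<Rightarrow> real" and m :: "'i \<Rightarrow> real"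
  assumes T: "finite T" and K: "finite K"
    and orth: "\<And>a b. a \<in> T \<Longrightarrow> b \<in> T \<Longrightarrow> inner_on K (w a) (w b) = (if a = b then 1 else 0)"
    and span: "proj_sq_norm K T w m = inner_on K m m"
    and card_T: "card T \<ge> 2" and card_K: "card K \<ge> card T + 2"
  shows "distr (std_gauss K) borel (\<lambda>y. proj_F_stat K T w (\<lambda>k. y k + m k))
       = nc_F (card T) (card K - card T) (inner_on K m m)"
proof -
  obtain Q A where Q: "Q \<in> givens_rotations K" and AK: "A \<subseteq> K" and card_A: "card A = card T"
    and proj: "\<And>y. proj_sq_norm K T w y = (\<Sum>k\<in>A. (Q y k)\<^sup>2)"
    using givens_rotation_projection[OF T K orth] by blast
  define B where "B = K - A"
  have A: "finite A" and B: "finite B" and AB: "A \<inter> B = {}" and KAB: "K = A \<union> B"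
    using AK K by (auto simp: B_def intro: finite_subset)
  have card_B: "card B = card K - card T"
    unfolding B_def card_A[symmetric] by (rule card_Diff_subset[OF A AK])
  have residual: "inner_on K y y - proj_sq_norm K T w y = (\<Sum>k\<in>B. (Q y k)\<^sup>2)" for y
  proof -
    have "inner_on K y y = (\<Sum>k\<in>A \<union> B. (Q y k)\<^sup>2)"
      using givens_rotations_inner[OF Q K order_refl, of y y] by (simp add: inner_on_self KAB)
    then show ?thesis
      using sum.union_disjoint[OF A B AB, of "\<lambda>k. (Q y k)\<^sup>2"] proj[of y] by simp
  qed
  have "(\<Sum>k\<in>B. (Q m k)\<^sup>2) = 0"
    using residual[of m] span by simp
  then have Qm_B: "Q m k = 0" if "k \<in> B" for k
    using B that by (simp add: sum_nonneg_eq_0_iff)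
  define G where "G = (\<lambda>y::'i \<Rightarrow> real.
    ((\<Sum>k\<in>A. (y k + Q m k)\<^sup>2) / real (card A)) / ((\<Sum>k\<in>B. (y k)\<^sup>2) / real (card B)))"
  have [measurable]: "G \<in> borel_measurable (std_gauss K)"
    unfolding G_def KAB by measurable
  have rotated: "proj_F_stat K T w z
      = ((\<Sum>k\<in>A. (Q z k)\<^sup>2) / real (card A)) / ((\<Sum>k\<in>B. (Q z k)\<^sup>2) / real (card B))" for z
    unfolding proj_F_stat_def residual by (simp only: proj card_A card_B)
  have "proj_F_stat K T w (\<lambda>k. y k + m k) = G (Q y)" for y
    unfolding rotated G_def givens_rotations_add[OF Q] by (simp add: Qm_B)
  then have "distr (std_gauss K) borel (\<lambda>y. proj_F_stat K T w (\<lambda>k. y k + m k)) = distr (std_gauss K) borel G"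
    using distr_measure_preserving[OF givens_rotations_measure_preserving[OF Q K], of G borel] by simp
  also have "\<dots> = nc_F (card A) (card B) (\<Sum>k\<in>A. (Q m k)\<^sup>2)"
    unfolding G_def KAB using card_A card_B card_T card_K
    by (intro std_gauss_ratio_nc_F[OF A B AB]) auto
  also have "(\<Sum>k\<in>A. (Q m k)\<^sup>2) = inner_on K m m"
    using proj[of m] span by simp
  finally show ?thesis
    by (simp add: card_A card_B)
qed

lemma (in prob_space) indep_normal_std_gauss:
  fixes X :: "'i \<Rightarrow> 'a \<Rightarrow> real"
  assumes I: "I \<noteq> {}" and indep: "indep_vars (\<lambda>_. borel) X I" and \<sigma>: "\<sigma> > 0"
    and normal: "\<And>i. i \<in> I \<Longrightarrow> distributed M lborel (X i) (normal_density 0 \<sigma>)"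
  shows "(\<lambda>\<omega>. \<lambda>i\<in>I. X i \<omega> / \<sigma>) \<in> measurable M (std_gauss I)"
    and "distr M (std_gauss I) (\<lambda>\<omega>. \<lambda>i\<in>I. X i \<omega> / \<sigma>) = std_gauss I"
proof -
  have indep': "indep_vars (\<lambda>_. borel) (\<lambda>i \<omega>. X i \<omega> / \<sigma>) I"
    by (rule indep_vars_compose2[OF indep]) simp
  then have rv: "(\<lambda>\<omega>. X i \<omega> / \<sigma>) \<in> borel_measurable M" if "i \<in> I" for i
    using that by (auto simp: indep_vars_def)
  have std: "distr M borel (\<lambda>\<omega>. X i \<omega> / \<sigma>) = std_normal" if i: "i \<in> I" for i
  proof -
    have "distributed M lborel (\<lambda>\<omega>. (X i \<omega> - 0) / \<sigma>) std_normal_density"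
      using normal_standard_normal_convert[OF \<sigma>] normal[OF i] by simp
    then have "distr M lborel (\<lambda>\<omega>. X i \<omega> / \<sigma>) = std_normal"
      by (simp add: distributed_def)
    moreover have "distr M borel (\<lambda>\<omega>. X i \<omega> / \<sigma>) = distr M lborel (\<lambda>\<omega>. X i \<omega> / \<sigma>)"
      by (rule distr_cong) auto
    ultimately show ?thesis by simp
  qed
  have sets: "sets (std_gauss I) = sets (PiM I (\<lambda>_. borel))"
    by (rule sets_PiM_cong) auto
  show "(\<lambda>\<omega>. \<lambda>i\<in>I. X i \<omega> / \<sigma>) \<in> measurable M (std_gauss I)"
    unfolding measurable_cong_sets[OF refl sets] by (rule measurable_restrict) (use rv in auto)
  have "distr M (std_gauss I) (\<lambda>\<omega>. \<lambda>i\<in>I. X i \<omega> / \<sigma>) = distr M (PiM I (\<lambda>_. borel)) (\<lambda>\<omega>. \<lambda>i\<in>I. X i \<omega> / \<sigma>)"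
    by (rule distr_cong[OF refl sets]) simp
  also have "\<dots> = PiM I (\<lambda>i. distr M borel (\<lambda>\<omega>. X i \<omega> / \<sigma>))"
    using indep_vars_iff_distr_eq_PiM'[OF I rv] indep' by simp
  also have "\<dots> = std_gauss I"
    by (rule PiM_cong) (auto simp: std)
  finally show "distr M (std_gauss I) (\<lambda>\<omega>. \<lambda>i\<in>I. X i \<omega> / \<sigma>) = std_gauss I" .
qed

section \<open>Realification of the detection statistic\<close>

definition re_coords :: "(nat \<Rightarrow> nat \<Rightarrow> nat \<Rightarrow> complex) \<Rightarrow> nat \<times> nat \<times> nat \<times> bool \<Rightarrow> real" where
  "re_coords Y = (\<lambda>(l, r, t, b). if b then Im (Y l r t) else Re (Y l r t))"

lemma re_coords_add: "re_coords (\<lambda>l r t. Y l r t + V l r t) k = re_coords Y k + re_coords V k"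
  by (auto simp: re_coords_def split: prod.splits)

locale signal_projection =
  fixes NR L Ns :: nat and s :: "nat \<Rightarrow> complex"
  assumes NR_pos: "NR > 0" and L_pos: "L > 0" and s_nonzero: "\<exists>t<Ns. s t \<noteq> 0"
begin

definition coords :: "(nat \<times> nat \<times> nat \<times> bool) set" where
  "coords = {..<L} \<times> {..<NR} \<times> {..<Ns} \<times> UNIV"

definition dirs :: "(nat \<times> nat \<times> bool) set" where
  "dirs = {..<L} \<times> {..<NR} \<times> UNIV"

definition s_sq_norm :: real where
  "s_sq_norm = (\<Sum>t<Ns. (cmod (s t))\<^sup>2)"

text \<open>\<open>s_dir (l, r, False)\<close> and \<open>s_dir (l, r, True)\<close> are the real coordinates of \<open>s / \<parallel>s\<parallel>\<close>
  and \<open>\<i> s / \<parallel>s\<parallel>\<close> placed in row \<open>r\<close> of block \<open>l\<close>: an orthonormal basis of the complex line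
  through \<open>s\<close>, so that projecting onto it yields \<open>|\<langle>Y\<^sub>l\<^sub>r, s\<^sup>*\<rangle>|\<^sup>2 / \<parallel>s\<parallel>\<^sup>2\<close>.\<close>
definition s_dir :: "nat \<times> nat \<times> bool \<Rightarrow> nat \<times> nat \<times> nat \<times> bool \<Rightarrow> real" where
  "s_dir = (\<lambda>(l, r, \<beta>). re_coords (\<lambda>l' r' t.
     if (l', r') = (l, r) then (if \<beta> then \<i> else 1) * s t / complex_of_real (sqrt s_sq_norm) else 0))"

lemma finite_coords: "finite coords" and finite_dirs: "finite dirs"
  by (simp_all add: coords_def dirs_def)

lemma card_coords: "card coords = 2 * NR * L * Ns" and card_dirs: "card dirs = 2 * NR * L"
  by (simp_all add: coords_def dirs_def card_cartesian_product)

lemma s_sq_norm_pos: "s_sq_norm > 0"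
proof -
  obtain t where t: "t < Ns" "s t \<noteq> 0" using s_nonzero by auto
  then have "0 < (cmod (s t))\<^sup>2" by simp
  also have "\<dots> \<le> s_sq_norm"
    unfolding s_sq_norm_def using t by (intro member_le_sum) auto
  finally show ?thesis .
qed

lemma sum_s_cnj_s: "(\<Sum>t<Ns. s t * cnj (s t)) = complex_of_real s_sq_norm"
  by (simp add: s_sq_norm_def complex_mult_cnj cmod_power2)

lemma sum_coords: "(\<Sum>k\<in>coords. q k) = (\<Sum>l<L. \<Sum>r<NR. \<Sum>t<Ns. q (l, r, t, False) + q (l, r, t, True))"
  by (simp add: coords_def sum.cartesian_product' UNIV_bool add.commute)

lemma sum_dirs: "(\<Sum>a\<in>dirs. p a) = (\<Sum>l<L. \<Sum>r<NR. p (l, r, False) + p (l, r, True))"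
  by (simp add: dirs_def sum.cartesian_product' UNIV_bool add.commute)

lemma sum_row_delta:
  assumes "l < L" "r < NR"
  shows "(\<Sum>l'<L. \<Sum>r'<NR. if (l', r') = (l, r) then f l' r' else 0) = (f l r :: real)"
proof -
  have "(\<Sum>r'<NR. if (l', r') = (l, r) then f l' r' else 0) = (if l' = l then f l r else 0)" for l'
    using assms by (cases "l' = l") (simp_all add: sum.delta')
  then show ?thesis
    using assms by (simp add: sum.delta')
qed

lemma inner_re_coords:
  "inner_on coords (re_coords Y) (re_coords V) = (\<Sum>l<L. \<Sum>r<NR. Re (\<Sum>t<Ns. Y l r t * cnj (V l r t)))"
  by (simp add: inner_on_def sum_coords re_coords_def Re_sum)

lemma inner_re_coords_self:
  "inner_on coords (re_coords Y) (re_coords Y) = (\<Sum>l<L. \<Sum>r<NR. \<Sum>t<Ns. (cmod (Y l r t))\<^sup>2)"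
  by (simp add: inner_re_coords Re_sum complex_mult_cnj cmod_power2)

lemma inner_re_coords_s_dir:
  assumes "l < L" "r < NR"
  shows "inner_on coords (re_coords Y) (s_dir (l, r, \<beta>))
       = Re (cnj (if \<beta> then \<i> else 1) * (\<Sum>t<Ns. Y l r t * cnj (s t))) / sqrt s_sq_norm"
proof -
  let ?u = "if \<beta> then \<i> else 1"
  have "inner_on coords (re_coords Y) (s_dir (l, r, \<beta>))
      = (\<Sum>l'<L. \<Sum>r'<NR. if (l', r') = (l, r)
           then Re (\<Sum>t<Ns. Y l' r' t * cnj (?u * s t / complex_of_real (sqrt s_sq_norm))) else 0)"
    unfolding s_dir_def case_prod_conv inner_re_coords
    by (intro sum.cong refl) (auto simp: diff_divide_distrib add_divide_distrib)
  also have "\<dots> = Re (\<Sum>t<Ns. Y l r t * cnj (?u * s t / complex_of_real (sqrt s_sq_norm)))"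
    by (rule sum_row_delta[OF assms])
  also have "(\<Sum>t<Ns. Y l r t * cnj (?u * s t / complex_of_real (sqrt s_sq_norm)))
      = cnj ?u * (\<Sum>t<Ns. Y l r t * cnj (s t)) / complex_of_real (sqrt s_sq_norm)"
    by (simp add: sum_distrib_left sum_divide_distrib mult_ac)
  finally show ?thesis by simp
qed

lemma s_dir_orthonormal:
  assumes "a \<in> dirs" "b \<in> dirs"
  shows "inner_on coords (s_dir a) (s_dir b) = (if a = b then 1 else 0)"
proof -
  obtain l r \<beta> where b: "b = (l, r, \<beta>)" and l: "l < L" and r: "r < NR"
    using assms(2) by (auto simp: dirs_def)
  obtain l' r' \<alpha> where a: "a = (l', r', \<alpha>)" by (cases a) auto
  let ?u = "\<lambda>\<gamma>. if \<gamma> then \<i> else 1"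
  let ?row = "\<lambda>t. if (l, r) = (l', r') then ?u \<alpha> * s t / complex_of_real (sqrt s_sq_norm) else 0"
  have "s_dir a = re_coords (\<lambda>l'' r'' t.
      if (l'', r'') = (l', r') then ?u \<alpha> * s t / complex_of_real (sqrt s_sq_norm) else 0)"
    by (simp add: a s_dir_def)
  then have "inner_on coords (s_dir a) (s_dir b) = Re (cnj (?u \<beta>) * (\<Sum>t<Ns. ?row t * cnj (s t))) / sqrt s_sq_norm"
    unfolding b by (simp only: inner_re_coords_s_dir[OF l r])
  also have "\<dots> = (if (l, r) = (l', r') then Re (cnj (?u \<beta>) * ?u \<alpha>) else 0)"
  proof (cases "(l, r) = (l', r')")
    case True
    have "(\<Sum>t<Ns. ?row t * cnj (s t)) = ?u \<alpha> * (\<Sum>t<Ns. s t * cnj (s t)) / complex_of_real (sqrt s_sq_norm)"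
      using True by (simp add: sum_distrib_left sum_divide_distrib mult_ac)
    also have "\<dots> = ?u \<alpha> * complex_of_real (sqrt s_sq_norm)"
    proof -
      have "complex_of_real s_sq_norm / complex_of_real (sqrt s_sq_norm) = complex_of_real (sqrt s_sq_norm)"
        using s_sq_norm_pos by (simp add: real_div_sqrt flip: of_real_divide)
      then show ?thesis by (simp only: sum_s_cnj_s times_divide_eq_right[symmetric])
    qed
    finally show ?thesis
      using True s_sq_norm_pos by (simp add: mult.assoc[symmetric])
  next
    case False
    then have "?row = (\<lambda>t. 0)" by auto
    then show ?thesis using False by (simp only: mult_zero_left sum.neutral_const) simp
  qed
  finally show ?thesis by (auto simp: a b)
qed

lemma proj_sq_norm_re_coords:
  "proj_sq_norm coords dirs s_dir (re_coords Y)
     = (\<Sum>l<L. \<Sum>r<NR. (cmod (\<Sum>t<Ns. Y l r t * cnj (s t)))\<^sup>2) / s_sq_norm"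
proof -
  have sq: "(Re (cnj 1 * S) / sqrt s_sq_norm)\<^sup>2 + (Re (cnj \<i> * S) / sqrt s_sq_norm)\<^sup>2
      = (cmod S)\<^sup>2 / s_sq_norm" for S
    using s_sq_norm_pos by (simp add: power_divide cmod_power2 add_divide_distrib)
  have "(inner_on coords (re_coords Y) (s_dir (l, r, False)))\<^sup>2 + (inner_on coords (re_coords Y) (s_dir (l, r, True)))\<^sup>2
      = (cmod (\<Sum>t<Ns. Y l r t * cnj (s t)))\<^sup>2 / s_sq_norm" if "l < L" "r < NR" for l r
    unfolding inner_re_coords_s_dir[OF that] if_False if_True by (rule sq)
  then show ?thesis
    unfolding proj_sq_norm_def sum_dirs sum_divide_distrib by (auto intro!: sum.cong)
qed

lemma LG_stat_eq_proj_F_stat: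
  "(real Ns - 1) * LG_stat NR L Ns s Y = proj_F_stat coords dirs s_dir (re_coords Y)"
proof -
  let ?P = "proj_sq_norm coords dirs s_dir (re_coords Y)"
  let ?I = "inner_on coords (re_coords Y) (re_coords Y)"
  have Ns: "Ns \<ge> 1" using s_nonzero by auto
  have "LG_stat NR L Ns s Y = ?P / (?I - ?P)"
    unfolding LG_stat_def Let_def s_sq_norm_def[symmetric] proj_sq_norm_re_coords inner_re_coords_self
    by (simp add: sum_subtractf sum_divide_distrib)
  moreover have "real (card coords - card dirs) = (real Ns - 1) * real (card dirs)"
    using Ns by (simp add: card_coords card_dirs of_nat_diff algebra_simps)
  ultimately show ?thesis
    using NR_pos L_pos by (simp add: proj_F_stat_def card_dirs)
qed

lemma inner_re_coords_signal:
  "inner_on coords (re_coords (\<lambda>l r t. h l r * s t)) (re_coords (\<lambda>l r t. h l r * s t))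
     = s_sq_norm * (\<Sum>l<L. \<Sum>r<NR. (cmod (h l r))\<^sup>2)"
  by (simp add: inner_re_coords_self s_sq_norm_def norm_mult power_mult_distrib sum_distrib_left
      sum_distrib_right mult.commute)

lemma proj_sq_norm_signal:
  "proj_sq_norm coords dirs s_dir (re_coords (\<lambda>l r t. h l r * s t))
     = inner_on coords (re_coords (\<lambda>l r t. h l r * s t)) (re_coords (\<lambda>l r t. h l r * s t))"
proof -
  have "(\<Sum>t<Ns. h l r * s t * cnj (s t)) = h l r * complex_of_real s_sq_norm" for l r
    by (simp add: sum_s_cnj_s[symmetric] sum_distrib_left mult.assoc)
  then have "(cmod (\<Sum>t<Ns. h l r * s t * cnj (s t)))\<^sup>2 / s_sq_norm = s_sq_norm * (cmod (h l r))\<^sup>2" for l r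
    using s_sq_norm_pos by (simp add: norm_mult power2_eq_square)
  then show ?thesis
    by (simp add: proj_sq_norm_re_coords inner_re_coords_signal sum_divide_distrib sum_distrib_left)
qed

lemma distr_LG_stat_signal_plus_noise:
  fixes M :: "'w measure" and Z :: "'w \<Rightarrow> nat \<Rightarrow> nat \<Rightarrow> nat \<Rightarrow> complex" and h :: "nat \<Rightarrow> nat \<Rightarrow> complex"
  assumes M: "prob_space M" and Ns: "Ns \<ge> 2" and \<sigma>: "\<sigma> > 0"
    and indep: "prob_space.indep_vars M (\<lambda>_. borel) (\<lambda>k \<omega>. re_coords (Z \<omega>) k) coords"
    and normal: "\<And>k. k \<in> coords \<Longrightarrow> distributed M lborel (\<lambda>\<omega>. re_coords (Z \<omega>) k) (normal_density 0 \<sigma>)"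
  shows "distr M borel (\<lambda>\<omega>. (real Ns - 1) * LG_stat NR L Ns s (\<lambda>l r t. h l r * s t + Z \<omega> l r t))
       = nc_F (2 * NR * L) (2 * NR * L * (Ns - 1)) (s_sq_norm * (\<Sum>l<L. \<Sum>r<NR. (cmod (h l r))\<^sup>2) / \<sigma>\<^sup>2)"
proof -
  define g where "g = (\<lambda>\<omega>. \<lambda>k\<in>coords. re_coords (Z \<omega>) k / \<sigma>)"
  define m where "m = (\<lambda>k. re_coords (\<lambda>l r t. h l r * s t) k / \<sigma>)"
  define F where "F = (\<lambda>y. proj_F_stat coords dirs s_dir (\<lambda>k. y k + m k))"
  have "(0, 0, 0, False) \<in> coords"
    using NR_pos L_pos Ns by (simp add: coords_def)
  then have "coords \<noteq> {}" by blast
  then have g: "g \<in> measurable M (std_gauss coords)" and law: "distr M (std_gauss coords) g = std_gauss coords"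
    unfolding g_def using prob_space.indep_normal_std_gauss[OF M _ indep \<sigma> normal] by auto
  have [measurable]: "F \<in> borel_measurable (std_gauss coords)"
    unfolding F_def by (rule proj_F_stat_shift_measurable)
  have card_dirs_ge: "card dirs \<ge> 2"
    using NR_pos L_pos by (simp add: card_dirs)
  have "card dirs * 2 \<le> card dirs * Ns"
    using Ns by (rule mult_le_mono2)
  moreover have "card coords = card dirs * Ns"
    by (simp add: card_coords card_dirs)
  ultimately have card_le: "card dirs + 2 \<le> card coords"
    using card_dirs_ge by linarith
  have "(real Ns - 1) * LG_stat NR L Ns s (\<lambda>l r t. h l r * s t + Z \<omega> l r t) = F (g \<omega>)" for \<omega>
  proof -
    have "(real Ns - 1) * LG_stat NR L Ns s (\<lambda>l r t. h l r * s t + Z \<omega> l r t)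
        = proj_F_stat coords dirs s_dir (\<lambda>k. re_coords (\<lambda>l r t. h l r * s t + Z \<omega> l r t) k / \<sigma>)"
      using \<sigma> by (simp add: LG_stat_eq_proj_F_stat proj_F_stat_scale)
    also have "\<dots> = F (g \<omega>)"
      unfolding F_def by (rule proj_F_stat_cong) (simp add: g_def m_def re_coords_add add_divide_distrib)
    finally show ?thesis .
  qed
  then have "distr M borel (\<lambda>\<omega>. (real Ns - 1) * LG_stat NR L Ns s (\<lambda>l r t. h l r * s t + Z \<omega> l r t))
      = distr (std_gauss coords) borel F"
    using distr_distr[of F "std_gauss coords" borel g M] g by (simp add: comp_def law)
  also have "\<dots> = nc_F (card dirs) (card coords - card dirs) (inner_on coords m m)"
    unfolding F_def using card_dirs_ge card_le
    by (intro std_gauss_proj_F_stat_nc_F finite_dirs finite_coords s_dir_orthonormal)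
      (simp_all add: m_def inner_on_scale proj_sq_norm_scale proj_sq_norm_signal card_coords card_dirs)
  finally show ?thesis
    by (simp add: m_def inner_on_scale inner_re_coords_signal card_coords card_dirs diff_mult_distrib2)
qed

end

theorem proposition2:
  fixes M :: "'w measure"
    and NR L Ns :: nat
    and s :: "nat \<Rightarrow> complex"
    and h :: "nat \<Rightarrow> nat \<Rightarrow> complex"
    and Z :: "'w \<Rightarrow> nat \<Rightarrow> nat \<Rightarrow> nat \<Rightarrow> complex"
    and sigma2 :: real
  assumes "prob_space M"
    and "NR > 0" and "L > 0" and "Ns \<ge> 2"
    and "\<exists>t<Ns. s t \<noteq> 0"
    and "sigma2 > 0"
    and "prob_space.indep_vars M (\<lambda>_. borel)
           (\<lambda>(l, r, t, b) \<omega>. if b then Im (Z \<omega> l r t) else Re (Z \<omega> l r t))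
           ({..<L} \<times> {..<NR} \<times> {..<Ns} \<times> UNIV)"
    and "\<And>l r t. l < L \<Longrightarrow> r < NR \<Longrightarrow> t < Ns \<Longrightarrow>
           distributed M lborel (\<lambda>\<omega>. Re (Z \<omega> l r t)) (normal_density 0 (sqrt (sigma2 / 2)))"
    and "\<And>l r t. l < L \<Longrightarrow> r < NR \<Longrightarrow> t < Ns \<Longrightarrow>
           distributed M lborel (\<lambda>\<omega>. Im (Z \<omega> l r t)) (normal_density 0 (sqrt (sigma2 / 2)))"
  shows
    "distr M borel (\<lambda>\<omega>. (real Ns - 1) * LG_stat NR L Ns s (Z \<omega>))
       = nc_F (2 * NR * L) (2 * NR * L * (Ns - 1)) 0
     \<and> distr M borel
         (\<lambda>\<omega>. (real Ns - 1) * LG_stat NR L Ns s (\<lambda>l r t. h l r * s t + Z \<omega> l r t))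
       = nc_F (2 * NR * L) (2 * NR * L * (Ns - 1))
           (2 * (\<Sum>t<Ns. (cmod (s t))\<^sup>2) * (\<Sum>l<L. \<Sum>r<NR. (cmod (h l r))\<^sup>2) / sigma2)"
proof -
  interpret signal_projection NR L Ns s
    using assms(2,3,5) by unfold_locales
  have "(\<lambda>k \<omega>. re_coords (Z \<omega>) k) = (\<lambda>(l, r, t, b) \<omega>. if b then Im (Z \<omega> l r t) else Re (Z \<omega> l r t))"
    by (auto simp: re_coords_def fun_eq_iff)
  then have indep: "prob_space.indep_vars M (\<lambda>_. borel) (\<lambda>k \<omega>. re_coords (Z \<omega>) k) coords"
    using assms(7) by (simp add: coords_def)
  have normal: "distributed M lborel (\<lambda>\<omega>. re_coords (Z \<omega>) k) (normal_density 0 (sqrt (sigma2 / 2)))"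
    if k: "k \<in> coords" for k
  proof -
    obtain l r t b where "k = (l, r, t, b)" "l < L" "r < NR" "t < Ns"
      using k by (cases k) (auto simp: coords_def)
    then show ?thesis
      using assms(8,9) by (cases b) (simp_all add: re_coords_def)
  qed
  have law: "distr M borel (\<lambda>\<omega>. (real Ns - 1) * LG_stat NR L Ns s (\<lambda>l r t. h' l r * s t + Z \<omega> l r t))
      = nc_F (2 * NR * L) (2 * NR * L * (Ns - 1)) (2 * s_sq_norm * (\<Sum>l<L. \<Sum>r<NR. (cmod (h' l r))\<^sup>2) / sigma2)"
    for h'
    using distr_LG_stat_signal_plus_noise[OF assms(1,4) _ indep normal, of h'] assms(6) by (simp add: mult_ac)
  show ?thesis
    using law[of "\<lambda>_ _. 0"] law[of h] by (simp add: s_sq_norm_def)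
qed

end
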